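(* Let $\mathcal{K}=(\mathcal{R},\mathcal{T})$ be an ME-consistent $\mathcal{ALCP}$ knowledge base over $\mathcal{L}$, $C,D$ concepts and $\kappa\in\mathcal{L}$ a context. There exist two ME-$\mathcal{ALCP}$-models $\mathcal{P},\mathcal{Q}$ of $\mathcal{K}$ with $\mathcal{B}^{s}_{\mathcal{K}}(C\sqsubseteq D\mid\kappa)=\Pr_{\mathcal{P}}(C\sqsubseteq D\mid\kappa)$ and $\mathcal{B}^{c}_{\mathcal{K}}(C\sqsubseteq D\mid\kappa)=\Pr_{\mathcal{Q}}(C\sqsubseteq D\mid\kappa)$.
   Context: $\mathcal{L}$ is a propositional language over a finite set of variables; $\mathrm{Int}(\mathcal{L})$ is the set of truth assignments. A probability distribution over $\mathcal{L}$ is $P:\mathrm{Int}(\mathcal{L})\to[0,1]$ summing to $1$, with $P(\phi)=\sum_{v\models\phi}P(v)$. A probabilistic constraint is $c_0+\sum_{i=1}^k c_i\,\mathsf{p}(\phi_i)\ge 0$ ($c_i\in\mathbb{R}$, $\phi_i\in\mathcal{L}$), satisfied by $P$ iff $c_0+\sum_ic_iP(\phi_i)\ge0$; $\mathrm{Mod}(\mathcal{R})$ is the set of distributions satisfying all constraints in $\mathcal{R}$; for consistent $\mathcal{R}$, $P^{ME}_{\mathcal{R}}$ is the unique maximizer in $\mathrm{Mod}(\mathcal{R})$ of $H(P)=-\sum_vP(v)\log P(v)$. Concepts: $C::=A\mid\neg C\mid C\sqcap C\mid\exists r.C$. An $\mathcal{L}$-GCI is $\langle C\sqsubseteq D:\kappa\rangle$,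 $\kappa\in\mathcal{L}$; an $\mathcal{L}$-TBox is a finite set of them; a KB is $\mathcal{K}=(\mathcal{R},\mathcal{T})$. A possible world $\mathcal{I}=(\Delta^{\mathcal{I}},\cdot^{\mathcal{I}},v^{\mathcal{I}})$ is a classical $\mathcal{ALC}$ interpretation together with $v^{\mathcal{I}}\in\mathrm{Int}(\mathcal{L})$; it models $\langle C\sqsubseteq D:\kappa\rangle$ iff $v^{\mathcal{I}}\not\models\kappa$ or $C^{\mathcal{I}}\subseteq D^{\mathcal{I}}$. An $\mathcal{ALCP}$-interpretation $\mathcal{P}=(\mathfrak{I},P_{\mathfrak{I}})$ is a nonempty finite set of possible worlds with a probability distribution on it; $P^{\mathcal{P}}(v)=\sum_{\mathcal{I}\in\mathfrak{I},v^{\mathcal{I}}=v}P_{\mathfrak{I}}(\mathcal{I})$. $\mathcal{P}$ is an ME-$\mathcal{ALCP}$-model of $\mathcal{K}$ iff all its worlds model every GCI of $\mathcal{T}$ and $P^{\mathcal{P}}=P^{ME}_{\mathcal{R}}$; $\mathrm{Mod}_{ME}(\mathcal{K})$ is the set of these; $\mathcal{K}$ is ME-consistent iff it is nonempty. $\Pr_{\mathcal{P}}(C\sqsubseteq D\mid\kappa)=\big(\sum_{\mathcal{I}\in\mathfrak{I},v^{\mathcal{I}}\models\kappa,C^{\mathcal{I}}\subseteq D^{\mathcal{I}}}P_{\mathfrak{I}}(\mathcal{I})\big)/\big(\sum_{\mathcal{I}\in\mathfrak{I},v^{\mathcal{I}}\models\kappa}P_{\mathfrak{I}}(\mathcal{I})\big)$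 (defined when the denominator is positive). Sceptical degree: $\mathcal{B}^{s}_{\mathcal{K}}(C\sqsubseteq D\mid\kappa)=\inf_{\mathcal{P}\in\mathrm{Mod}_{ME}(\mathcal{K})}\Pr_{\mathcal{P}}(C\sqsubseteq D\mid\kappa)$; credulous degree $\mathcal{B}^{c}_{\mathcal{K}}$: the corresponding supremum. *)

theory Defs
  imports Complex_Main
begin

datatype 'v form = PVar 'v | PNot "'v form" | PAnd "'v form" "'v form" | POr "'v form" "'v form"

type_synonym 'v assignment = "'v \<Rightarrow> bool"

fun holds :: "'v assignment \<Rightarrow> 'v form \<Rightarrow> bool" where
  "holds v (PVar x) = v x"
| "holds v (PNot f) = (\<not> holds v f)"
| "holds v (PAnd f g) = (holds v f \<and> holds v g)"
| "holds v (POr f g) = (holds v f \<or> holds v g)"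

definition is_dist :: "('v::finite assignment \<Rightarrow> real) \<Rightarrow> bool" where
  "is_dist P \<longleftrightarrow> (\<forall>v. P v \<ge> 0) \<and> (\<Sum>v\<in>UNIV. P v) = 1"

definition probF :: "('v::finite assignment \<Rightarrow> real) \<Rightarrow> 'v form \<Rightarrow> real" where
  "probF P \<phi> = (\<Sum>v\<in>{v. holds v \<phi>}. P v)"

text \<open>A probabilistic constraint c0 + sum_i c_i p(phi_i) >= 0 is a pair (c0, [(c_1,phi_1),...]).\<close>

type_synonym 'v constraint = "real \<times> (real \<times> 'v form) list"

definition sat_constraint :: "('v::finite assignment \<Rightarrow> real) \<Rightarrow> 'v constraint \<Rightarrow> bool" where
  "sat_constraint P c \<longleftrightarrow> fst c + (\<Sum>(ci, \<phi>)\<leftarrow>snd c. ci * probF P \<phi>) \<ge> 0"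

definition ModR :: "'v::finite constraint set \<Rightarrow> ('v assignment \<Rightarrow> real) set" where
  "ModR R = {P. is_dist P \<and> (\<forall>c\<in>R. sat_constraint P c)}"

definition entropy :: "('v::finite assignment \<Rightarrow> real) \<Rightarrow> real" where
  "entropy P = - (\<Sum>v\<in>UNIV. if P v = 0 then 0 else P v * ln (P v))"

text \<open>The ME distribution: the (unique, for consistent R) entropy maximizer in Mod(R).\<close>

definition ME_dist :: "'v::finite constraint set \<Rightarrow> ('v assignment \<Rightarrow> real)" where
  "ME_dist R = (THE P. P \<in> ModR R \<and> (\<forall>Q\<in>ModR R. entropy Q \<le> entropy P))"

datatype ('c, 'r) concept =
    CAtom 'c
  | CNeg "('c, 'r) concept"
  | CAnd "('c, 'r) concept" "('c, 'r) concept"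
  | CEx 'r "('c, 'r) concept"

text \<open>L-GCI <C \<sqsubseteq> D : kappa> as a triple (C, D, kappa).\<close>

type_synonym ('c, 'r, 'v) gci = "('c, 'r) concept \<times> ('c, 'r) concept \<times> 'v form"

record ('c, 'r, 'd, 'v) world =
  dom :: "'d set"
  cint :: "'c \<Rightarrow> 'd set"
  rint :: "'r \<Rightarrow> ('d \<times> 'd) set"
  val :: "'v assignment"

definition wf_world :: "('c, 'r, 'd, 'v) world \<Rightarrow> bool" where
  "wf_world I \<longleftrightarrow> dom I \<noteq> {} \<and> (\<forall>A. cint I A \<subseteq> dom I) \<and> (\<forall>r. rint I r \<subseteq> dom I \<times> dom I)"

fun ext :: "('c, 'r, 'd, 'v) world \<Rightarrow> ('c, 'r) concept \<Rightarrow> 'd set" where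
  "ext I (CAtom A) = cint I A"
| "ext I (CNeg C) = dom I - ext I C"
| "ext I (CAnd C D) = ext I C \<inter> ext I D"
| "ext I (CEx r C) = {x \<in> dom I. \<exists>y. (x, y) \<in> rint I r \<and> y \<in> ext I C}"

definition world_models_gci :: "('c, 'r, 'd, 'v) world \<Rightarrow> ('c, 'r, 'v) gci \<Rightarrow> bool" where
  "world_models_gci I g = (case g of (C, D, \<kappa>) \<Rightarrow> \<not> holds (val I) \<kappa> \<or> ext I C \<subseteq> ext I D)"

type_synonym ('c, 'r, 'd, 'v) alcp = "('c, 'r, 'd, 'v) world set \<times> (('c, 'r, 'd, 'v) world \<Rightarrow> real)"

definition is_ALCP :: "('c, 'r, 'd, 'v) alcp \<Rightarrow> bool" where
  "is_ALCP M = (case M of (W, PW) \<Rightarrow>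
     finite W \<and> W \<noteq> {} \<and> (\<forall>I\<in>W. wf_world I) \<and> (\<forall>I\<in>W. PW I \<ge> 0) \<and> (\<Sum>I\<in>W. PW I) = 1)"

definition marginal :: "('c, 'r, 'd, 'v) alcp \<Rightarrow> 'v assignment \<Rightarrow> real" where
  "marginal M v = (case M of (W, PW) \<Rightarrow> \<Sum>I\<in>{I\<in>W. val I = v}. PW I)"

definition ME_models :: "'v::finite constraint set \<Rightarrow> ('c, 'r, 'v) gci set \<Rightarrow> ('c, 'r, 'd, 'v) alcp set" where
  "ME_models R T = {M. is_ALCP M \<and> (\<forall>I\<in>fst M. \<forall>g\<in>T. world_models_gci I g) \<and> marginal M = ME_dist R}"

definition ME_consistent :: "'v::finite constraint set \<Rightarrow> ('c, 'r, 'v) gci set \<Rightarrow> 'd itself \<Rightarrow> bool" where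
  "ME_consistent R T (_ :: 'd itself) \<longleftrightarrow> (ME_models R T :: ('c, 'r, 'd, 'v) alcp set) \<noteq> {}"

definition Pr :: "('c, 'r, 'd, 'v) alcp \<Rightarrow> ('c, 'r) concept \<Rightarrow> ('c, 'r) concept \<Rightarrow> 'v form \<Rightarrow> real" where
  "Pr M C D \<kappa> = (case M of (W, PW) \<Rightarrow>
     (\<Sum>I\<in>{I\<in>W. holds (val I) \<kappa> \<and> ext I C \<subseteq> ext I D}. PW I) / (\<Sum>I\<in>{I\<in>W. holds (val I) \<kappa>}. PW I))"

definition sceptical :: "'v::finite constraint set \<Rightarrow> ('c, 'r, 'v) gci set \<Rightarrow> 'd itself \<Rightarrow>
    ('c, 'r) concept \<Rightarrow> ('c, 'r) concept \<Rightarrow> 'v form \<Rightarrow> real" where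
  "sceptical R T (_ :: 'd itself) C D \<kappa> = (INF M\<in>(ME_models R T :: ('c, 'r, 'd, 'v) alcp set). Pr M C D \<kappa>)"

definition credulous :: "'v::finite constraint set \<Rightarrow> ('c, 'r, 'v) gci set \<Rightarrow> 'd itself \<Rightarrow>
    ('c, 'r) concept \<Rightarrow> ('c, 'r) concept \<Rightarrow> 'v form \<Rightarrow> real" where
  "credulous R T (_ :: 'd itself) C D \<kappa> = (SUP M\<in>(ME_models R T :: ('c, 'r, 'd, 'v) alcp set). Pr M C D \<kappa>)"

end

theory Submission
  imports Defs
begin

text \<open>Every ME-model has the same marginal ME_dist R, so conditioning on \<open>\<kappa>\<close> always divides
by the same number, and the models differ only in how the mass ME_dist R v of each valuation v
is spread over worlds with valuation v. Such mass can make C \<sqsubseteq> D true only if some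
T-world with valuation v satisfies C \<sqsubseteq> D, and false only if some T-world violates it.
Hence the model that puts all of ME_dist R v on a single world with valuation v, chosen to
satisfy (resp. violate) C \<sqsubseteq> D whenever possible, attains the credulous (resp. sceptical)
degree.\<close>

definition tbox_world :: "('c, 'r, 'v) gci set \<Rightarrow> ('c, 'r, 'd, 'v) world \<Rightarrow> bool" where
  "tbox_world T I \<longleftrightarrow> wf_world I \<and> (\<forall>g\<in>T. world_models_gci I g)"

definition mass :: "('c, 'r, 'd, 'v) alcp \<Rightarrow> (('c, 'r, 'd, 'v) world \<Rightarrow> bool) \<Rightarrow> real" where
  "mass M Q = (\<Sum>I\<in>{I\<in>fst M. Q I}. snd M I)"

definition support_model ::
    "('v assignment \<Rightarrow> real) \<Rightarrow> ('v assignment \<Rightarrow> ('c, 'r, 'd, 'v) world) \<Rightarrow> ('c, 'r, 'd, 'v) alcp" where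
  "support_model P w = (w ` {v. P v > 0}, \<lambda>I. P (val I))"

lemma Pr_eq_mass:
  "Pr M C D \<kappa> = mass M (\<lambda>I. holds (val I) \<kappa> \<and> ext I C \<subseteq> ext I D) / mass M (\<lambda>I. holds (val I) \<kappa>)"
  by (cases M) (simp add: Pr_def mass_def)

lemma mass_by_val:
  fixes M :: "('c, 'r, 'd, 'v::finite) alcp"
  assumes "finite (fst M)"
  shows "mass M Q = (\<Sum>v\<in>UNIV. mass M (\<lambda>I. val I = v \<and> Q I))"
proof -
  have "(\<Sum>v\<in>UNIV. sum (snd M) {I \<in> {I\<in>fst M. Q I}. val I = v}) = sum (snd M) {I\<in>fst M. Q I}"
    by (rule sum.group) (use assms in auto)
  moreover have "{I \<in> {I\<in>fst M. Q I}. val I = v} = {I\<in>fst M. val I = v \<and> Q I}" for v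
    by auto
  ultimately show ?thesis by (simp add: mass_def)
qed

lemma mass_split:
  assumes "finite (fst M)"
  shows "mass M Q = mass M (\<lambda>I. Q I \<and> S I) + mass M (\<lambda>I. Q I \<and> \<not> S I)"
proof -
  have "{I\<in>fst M. Q I} = {I\<in>fst M. Q I \<and> S I} \<union> {I\<in>fst M. Q I \<and> \<not> S I}" by auto
  then show ?thesis
    unfolding mass_def using assms by (simp add: sum.union_disjoint[symmetric] disjoint_iff)
qed

lemma ME_modelsD:
  assumes "M \<in> ME_models R T"
  shows "finite (fst M)" "\<And>I. I \<in> fst M \<Longrightarrow> tbox_world T I" "\<And>I. I \<in> fst M \<Longrightarrow> snd M I \<ge> 0"
    "mass M (\<lambda>_. True) = 1" "mass M (\<lambda>I. val I = v) = ME_dist R v"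
proof -
  obtain W p where "M = (W, p)" by (cases M)
  with assms have "is_ALCP (W, p)" "\<forall>I\<in>W. \<forall>g\<in>T. world_models_gci I g" "marginal (W, p) = ME_dist R"
    unfolding ME_models_def by auto
  then show "finite (fst M)" "\<And>I. I \<in> fst M \<Longrightarrow> tbox_world T I" "\<And>I. I \<in> fst M \<Longrightarrow> snd M I \<ge> 0"
    "mass M (\<lambda>_. True) = 1" "mass M (\<lambda>I. val I = v) = ME_dist R v"
    using \<open>M = (W, p)\<close> unfolding is_ALCP_def tbox_world_def mass_def marginal_def
    by (auto dest: fun_cong[of _ _ v])
qed

lemma mass_nonneg:
  assumes "M \<in> ME_models R T"
  shows "mass M Q \<ge> 0"
  unfolding mass_def using ME_modelsD(3)[OF assms] by (auto intro: sum_nonneg)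

lemma mass_val_le_ME_dist:
  assumes "M \<in> ME_models R T"
  shows "mass M (\<lambda>I. val I = v \<and> Q I) \<le> ME_dist R v"
proof -
  have "mass M (\<lambda>I. val I = v \<and> Q I) \<le> mass M (\<lambda>I. val I = v)"
    unfolding mass_def by (rule sum_mono2) (use ME_modelsD[OF assms] in auto)
  then show ?thesis using ME_modelsD(5)[OF assms] by simp
qed

lemma mass_val_restrict:
  fixes M :: "('c, 'r, 'd, 'v::finite) alcp"
  assumes "M \<in> ME_models R T"
  shows "mass M (\<lambda>I. \<phi> (val I)) = (\<Sum>v\<in>{v. \<phi> v}. ME_dist R v)"
proof -
  have "mass M (\<lambda>I. val I = v \<and> \<phi> (val I)) = (if \<phi> v then ME_dist R v else 0)" for v
  proof -
    have "{I\<in>fst M. val I = v \<and> \<phi> (val I)} = (if \<phi> v then {I\<in>fst M. val I = v} else {})"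
      by auto
    then show ?thesis using ME_modelsD(5)[OF assms, of v] by (simp add: mass_def)
  qed
  then show ?thesis
    unfolding mass_by_val[OF ME_modelsD(1)[OF assms], of "\<lambda>I. \<phi> (val I)"]
    by (simp add: sum.If_cases)
qed

lemma ME_dist_is_dist:
  fixes M :: "('c, 'r, 'd, 'v::finite) alcp"
  assumes "M \<in> ME_models R T"
  shows "is_dist (ME_dist R)"
proof -
  have "ME_dist R v \<ge> 0" for v
    using ME_modelsD(5)[OF assms, of v] mass_nonneg[OF assms, of "\<lambda>I. val I = v"] by simp
  moreover have "(\<Sum>v\<in>UNIV. ME_dist R v) = 1"
    using mass_val_restrict[OF assms, of "\<lambda>_. True"] ME_modelsD(4)[OF assms] by simp
  ultimately show ?thesis unfolding is_dist_def by blast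
qed

lemma mass_support_model_val:
  assumes "\<And>v. P v \<ge> 0" and "\<And>v. P v > 0 \<Longrightarrow> val (w v) = v"
  shows "mass (support_model P w) (\<lambda>I. val I = v \<and> Q I) = (if Q (w v) then P v else 0)"
proof (cases "P v > 0")
  case True
  then have "{I \<in> w ` {v. P v > 0}. val I = v \<and> Q I} = (if Q (w v) then {w v} else {})"
    using assms(2) by auto
  then show ?thesis using True assms(2) by (simp add: mass_def support_model_def)
next
  case False
  then have "P v = 0" using assms(1)[of v] by simp
  moreover have "{I \<in> w ` {v. P v > 0}. val I = v \<and> Q I} = {}"
    using False assms(2) by auto
  ultimately show ?thesis by (simp add: mass_def support_model_def)
qed

lemma support_model_in_ME_models:
  fixes w :: "'v::finite assignment \<Rightarrow> ('c, 'r, 'd, 'v) world"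
  assumes dist: "is_dist (ME_dist R)"
    and w: "\<And>v. ME_dist R v > 0 \<Longrightarrow> tbox_world T (w v) \<and> val (w v) = v"
  shows "support_model (ME_dist R) w \<in> ME_models R T"
proof -
  let ?M = "support_model (ME_dist R) w"
  have nonneg: "\<And>v. ME_dist R v \<ge> 0" using dist unfolding is_dist_def by simp
  have marg: "mass ?M (\<lambda>I. val I = v) = ME_dist R v" for v
    using mass_support_model_val[of "ME_dist R" w v "\<lambda>_. True"] nonneg w by simp
  have "mass ?M (\<lambda>_. True) = 1"
    using mass_by_val[of ?M "\<lambda>_. True"] marg dist
    by (simp add: support_model_def is_dist_def)
  moreover have "marginal ?M = ME_dist R"
    using marg by (simp add: fun_eq_iff marginal_def mass_def support_model_def)
  moreover have "fst ?M \<noteq> {}"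
    using \<open>mass ?M (\<lambda>_. True) = 1\<close> by (auto simp: mass_def)
  moreover have "finite (fst ?M)" by (simp add: support_model_def)
  ultimately show ?thesis
    using w nonneg unfolding ME_models_def is_ALCP_def tbox_world_def
    by (auto simp: support_model_def mass_def)
qed

lemma ME_models_has_world_with_val:
  fixes M :: "('c, 'r, 'd, 'v::finite) alcp"
  assumes "M \<in> ME_models R T" and "ME_dist R v > 0"
  shows "\<exists>I :: ('c, 'r, 'd, 'v) world. tbox_world T I \<and> val I = v"
proof -
  have "{I\<in>fst M. val I = v} \<noteq> {}"
    using assms(2) ME_modelsD(5)[OF assms(1), of v] by (auto simp: mass_def simp del: Collect_empty_eq)
  then show ?thesis using ME_modelsD(2)[OF assms(1)] by auto
qed

lemma ME_model_maximising_mass: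
  fixes M0 :: "('c, 'r, 'd, 'v::finite) alcp" and Q :: "('c, 'r, 'd, 'v) world \<Rightarrow> bool"
  assumes "M0 \<in> ME_models R T"
  obtains M where "M \<in> ME_models R T" and "\<And>M'. M' \<in> ME_models R T \<Longrightarrow> mass M' Q \<le> mass M Q"
proof -
  let ?P = "ME_dist R"
  have "\<exists>I. ?P v > 0 \<longrightarrow>
      tbox_world T I \<and> val I = v \<and> ((\<exists>J. tbox_world T J \<and> val J = v \<and> Q J) \<longrightarrow> Q I)" for v
  proof (cases "\<exists>J. tbox_world T J \<and> val J = v \<and> Q J")
    case False
    then show ?thesis using ME_models_has_world_with_val[OF assms, of v] by blast
  qed blast
  then obtain w :: "'v assignment \<Rightarrow> ('c, 'r, 'd, 'v) world" where w:
    "\<And>v. ?P v > 0 \<Longrightarrow> tbox_world T (w v) \<and> val (w v) = v \<and>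
      ((\<exists>J. tbox_world T J \<and> val J = v \<and> Q J) \<longrightarrow> Q (w v))"
    using choice[of "\<lambda>v I. ?P v > 0 \<longrightarrow> tbox_world T I \<and> val I = v \<and>
      ((\<exists>J. tbox_world T J \<and> val J = v \<and> Q J) \<longrightarrow> Q I)"] by blast
  have dist: "is_dist ?P" using ME_dist_is_dist[OF assms] .
  then have nonneg: "\<And>v. ?P v \<ge> 0" unfolding is_dist_def by simp
  let ?M = "support_model ?P w"
  have model: "?M \<in> ME_models R T"
    by (rule support_model_in_ME_models[OF dist]) (use w in blast)
  have "mass M' Q \<le> mass ?M Q" if M': "M' \<in> ME_models R T" for M'
  proof -
    have "mass M' (\<lambda>I. val I = v \<and> Q I) \<le> mass ?M (\<lambda>I. val I = v \<and> Q I)" for v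
    proof (cases "Q (w v) \<or> ?P v = 0")
      case True
      have "mass ?M (\<lambda>I. val I = v \<and> Q I) = ?P v"
        using True mass_support_model_val[of ?P w v Q] nonneg w by auto
      then show ?thesis using mass_val_le_ME_dist[OF M'] by simp
    next
      case False
      then have "{I\<in>fst M'. val I = v \<and> Q I} = {}"
        using w[of v] nonneg[of v] ME_modelsD(2)[OF M'] by force
      then have "mass M' (\<lambda>I. val I = v \<and> Q I) = 0" unfolding mass_def by (simp only: sum.empty)
      then show ?thesis using mass_nonneg[OF model] by simp
    qed
    then show ?thesis
      unfolding mass_by_val[OF ME_modelsD(1)[OF M'], of Q] mass_by_val[OF ME_modelsD(1)[OF model], of Q]
      by (rule sum_mono)
  qed
  with model that show ?thesis by blast
qed

lemma Pr_ME_model: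
  assumes "M \<in> ME_models R T"
  shows "Pr M C D \<kappa> = mass M (\<lambda>I. holds (val I) \<kappa> \<and> ext I C \<subseteq> ext I D) / probF (ME_dist R) \<kappa>"
    and "Pr M C D \<kappa> = (probF (ME_dist R) \<kappa> - mass M (\<lambda>I. holds (val I) \<kappa> \<and> \<not> ext I C \<subseteq> ext I D))
                        / probF (ME_dist R) \<kappa>"
  using mass_val_restrict[OF assms, of "\<lambda>v. holds v \<kappa>"]
    mass_split[OF ME_modelsD(1)[OF assms], of "\<lambda>I. holds (val I) \<kappa>" "\<lambda>I. ext I C \<subseteq> ext I D"]
  by (simp_all add: Pr_eq_mass probF_def)

theorem corollary1:
  fixes R :: "'v::finite constraint set"
    and T :: "('c, 'r, 'v) gci set"
    and C D :: "('c, 'r) concept"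
    and \<kappa> :: "'v form"
  assumes "finite R" and "finite T"
    and "ME_consistent R T TYPE('d)"
  shows "\<exists>P\<in>(ME_models R T :: ('c, 'r, 'd, 'v) alcp set).
           \<exists>Q\<in>(ME_models R T :: ('c, 'r, 'd, 'v) alcp set).
             sceptical R T TYPE('d) C D \<kappa> = Pr P C D \<kappa> \<and>
             credulous R T TYPE('d) C D \<kappa> = Pr Q C D \<kappa>"
proof -
  obtain M0 where M0: "M0 \<in> (ME_models R T :: ('c, 'r, 'd, 'v) alcp set)"
    using assms(3) unfolding ME_consistent_def by blast
  have den: "probF (ME_dist R) \<kappa> \<ge> 0"
    using ME_dist_is_dist[OF M0] by (simp add: probF_def is_dist_def sum_nonneg)
  obtain P :: "('c, 'r, 'd, 'v) alcp" where P: "P \<in> ME_models R T"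
    and P_violation_max: "\<And>M :: ('c, 'r, 'd, 'v) alcp. M \<in> ME_models R T \<Longrightarrow>
      mass M (\<lambda>I. holds (val I) \<kappa> \<and> \<not> ext I C \<subseteq> ext I D)
        \<le> mass P (\<lambda>I. holds (val I) \<kappa> \<and> \<not> ext I C \<subseteq> ext I D)"
    using ME_model_maximising_mass[OF M0, where Q = "\<lambda>I. holds (val I) \<kappa> \<and> \<not> ext I C \<subseteq> ext I D"] by blast
  obtain Q :: "('c, 'r, 'd, 'v) alcp" where Q: "Q \<in> ME_models R T"
    and Q_subsumption_max: "\<And>M :: ('c, 'r, 'd, 'v) alcp. M \<in> ME_models R T \<Longrightarrow>
      mass M (\<lambda>I. holds (val I) \<kappa> \<and> ext I C \<subseteq> ext I D)
        \<le> mass Q (\<lambda>I. holds (val I) \<kappa> \<and> ext I C \<subseteq> ext I D)"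
    using ME_model_maximising_mass[OF M0, where Q = "\<lambda>I. holds (val I) \<kappa> \<and> ext I C \<subseteq> ext I D"] by blast
  have P_least: "Pr P C D \<kappa> \<le> Pr M C D \<kappa>" if "M \<in> ME_models R T" for M :: "('c, 'r, 'd, 'v) alcp"
    unfolding Pr_ME_model(2)[OF P] Pr_ME_model(2)[OF that]
    by (rule divide_right_mono) (use P_violation_max[OF that] den in linarith)+
  have Q_greatest: "Pr M C D \<kappa> \<le> Pr Q C D \<kappa>" if "M \<in> ME_models R T" for M :: "('c, 'r, 'd, 'v) alcp"
    unfolding Pr_ME_model(1)[OF Q] Pr_ME_model(1)[OF that]
    by (rule divide_right_mono) (use Q_subsumption_max[OF that] den in linarith)+
  have "sceptical R T TYPE('d) C D \<kappa> = Pr P C D \<kappa>"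
    unfolding sceptical_def by (rule cInf_eq_minimum) (use P P_least in auto)
  moreover have "credulous R T TYPE('d) C D \<kappa> = Pr Q C D \<kappa>"
    unfolding credulous_def by (rule cSup_eq_maximum) (use Q Q_greatest in auto)
  ultimately show ?thesis using P Q by blast
qed

end
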